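(* Let $\mathbf L=(L,\vee,\wedge,0,1)$ be a complemented lattice with $0\ne1$ and $D$ a compatible deductive system of $\mathbf L$. Then: (i) $\Theta(D)$ is an equivalence relation on $L$ having the Substitution Property with respect to $\to$; (ii) $[1]\big(\Theta(D)\big)=D$.
   Context: For $a\in L$, $a^+:=\{x\in L\mid a\vee x=1,\ a\wedge x=0\}$ (the set of all complements of $a$), and $a\to b:=\{x\vee(a\wedge b)\mid x\in a^+\}$; for $A\subseteq L$, $a\to A:=\bigcup_{y\in A}(a\to y)$. A deductive system of $\mathbf L$ is a subset $D\subseteq L$ such that $1\in D$, and whenever $a\in D$, $b\in L$ and $a\to b\subseteq D$, then $b\in D$. A deductive system $D$ is compatible if for all $a,b,c,d\in L$: (1) if $a\to b\subseteq D$ and $x\to(c\to d)\subseteq D$ for all $x\in a\to b$, then $c\to d\subseteq D$; (2) if $a\to b\subseteq D$ and $b\to a\subseteq D$, then $x\to(b\to c)\subseteq D$ for all $x\in a\to c$. $\Theta(D):=\{(x,y)\in L^2\mid x\to y\subseteq D\text{ and }y\to x\subseteq D\}$. An equivalence relation $\Phi$ on $L$ has the Substitution Property with respect to $\to$ if $(a,b)\in\Phi$ implies $(a\to c)\times(b\to c)\subseteq\Phi$ for all $c\in L$. $[1]\Phi$ is the $\Phi$-class of $1$. *)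

theory Defs
  imports Main
begin

text \<open>A (bounded) lattice L is modelled by a type of class bounded_lattice;
  complementedness is an explicit hypothesis. Complements need not be unique.\<close>

definition complemented :: "'a::bounded_lattice itself \<Rightarrow> bool" where
  "complemented _ \<longleftrightarrow> (\<forall>a::'a. \<exists>x. sup a x = top \<and> inf a x = bot)"

definition compls :: "'a::bounded_lattice \<Rightarrow> 'a set" where
  "compls a = {x. sup a x = top \<and> inf a x = bot}"

definition impl :: "'a::bounded_lattice \<Rightarrow> 'a \<Rightarrow> 'a set" where
  "impl a b = {sup x (inf a b) | x. x \<in> compls a}"

definition impl_set :: "'a::bounded_lattice \<Rightarrow> 'a set \<Rightarrow> 'a set" where
  "impl_set a A = (\<Union>y\<in>A. impl a y)"

definition deductive_system :: "'a::bounded_lattice set \<Rightarrow> bool" where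
  "deductive_system D \<longleftrightarrow> top \<in> D \<and>
     (\<forall>a b. a \<in> D \<and> impl a b \<subseteq> D \<longrightarrow> b \<in> D)"

definition compatible :: "'a::bounded_lattice set \<Rightarrow> bool" where
  "compatible D \<longleftrightarrow>
     (\<forall>a b c d. impl a b \<subseteq> D \<and> (\<forall>x\<in>impl a b. impl_set x (impl c d) \<subseteq> D)
                 \<longrightarrow> impl c d \<subseteq> D) \<and>
     (\<forall>a b c. impl a b \<subseteq> D \<and> impl b a \<subseteq> D
                 \<longrightarrow> (\<forall>x\<in>impl a c. impl_set x (impl b c) \<subseteq> D))"

definition Theta :: "'a::bounded_lattice set \<Rightarrow> ('a \<times> 'a) set" where
  "Theta D = {(x, y). impl x y \<subseteq> D \<and> impl y x \<subseteq> D}"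

definition subst_prop :: "('a::bounded_lattice \<times> 'a) set \<Rightarrow> bool" where
  "subst_prop \<Phi> \<longleftrightarrow> (\<forall>a b c. (a, b) \<in> \<Phi> \<longrightarrow> impl a c \<times> impl b c \<subseteq> \<Phi>)"

end

theory Submission
  imports Defs
begin

text \<open>Transitivity of \<open>\<Theta>(D)\<close> comes from the first compatibility condition, the substitution
  property from the second; the class of \<open>1\<close> is \<open>D\<close> because \<open>1 \<rightarrow> b = {b}\<close> and
  \<open>b \<rightarrow> 1 = {1}\<close>.\<close>

lemma compls_top: "compls (top::'a::bounded_lattice) = {bot}"
  by (auto simp: compls_def)

lemma impl_top_left: "impl (top::'a::bounded_lattice) b = {b}"
  by (auto simp: impl_def compls_top)

lemma impl_top_right_subset: "impl (a::'a::bounded_lattice) top \<subseteq> {top}"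
  by (auto simp: impl_def compls_def sup_commute)

lemma impl_self_subset: "impl (a::'a::bounded_lattice) a \<subseteq> {top}"
  by (auto simp: impl_def compls_def sup_commute)

lemma impl_nonempty:
  assumes "complemented TYPE('a::bounded_lattice)"
  shows "impl (a::'a) b \<noteq> {}"
  using assms unfolding complemented_def impl_def compls_def by blast

lemma deductive_system_top: "deductive_system D \<Longrightarrow> top \<in> D"
  unfolding deductive_system_def by blast

lemma deductive_system_impl_set:
  assumes "deductive_system D" "u \<in> D" "impl_set u A \<subseteq> D"
  shows "A \<subseteq> D"
  using assms unfolding deductive_system_def impl_set_def by blast

lemma Theta_iff: "(x, y) \<in> Theta D \<longleftrightarrow> impl x y \<subseteq> D \<and> impl y x \<subseteq> D"
  by (simp add: Theta_def)

lemma refl_Theta: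
  assumes "deductive_system D"
  shows "refl (Theta D)"
  using impl_self_subset deductive_system_top[OF assms]
  by (auto simp: refl_on_def Theta_iff)

lemma sym_Theta: "sym (Theta D)"
  by (auto simp: sym_def Theta_iff)

lemma impl_subset_trans:
  assumes "complemented TYPE('a::bounded_lattice)" "deductive_system D" "compatible D"
    and xy: "impl (x::'a) y \<subseteq> D" and yx: "impl y x \<subseteq> D" and yz: "impl y z \<subseteq> D"
  shows "impl x z \<subseteq> D"
proof -
  obtain u where u: "u \<in> impl y z"
    using impl_nonempty[OF assms(1)] by blast
  \<comment> \<open>second compatibility condition with \<open>a, b, c := y, x, z\<close>\<close>
  have "impl_set u (impl x z) \<subseteq> D"
    using assms(3) xy yx u unfolding compatible_def by blast
  then show ?thesis
    using deductive_system_impl_set[OF assms(2)] u yz by blast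
qed

lemma trans_Theta:
  assumes "complemented TYPE('a::bounded_lattice)" "deductive_system D" "compatible D"
  shows "trans (Theta (D::'a set))"
  using impl_subset_trans[OF assms] by (auto simp: trans_def Theta_iff)

lemma equiv_Theta:
  assumes "complemented TYPE('a::bounded_lattice)" "deductive_system D" "compatible D"
  shows "equiv UNIV (Theta (D::'a set))"
  using refl_Theta[OF assms(2)] sym_Theta trans_Theta[OF assms] by (simp add: equiv_def)

lemma subst_prop_Theta:
  assumes "compatible D"
  shows "subst_prop (Theta D)"
  unfolding subst_prop_def
proof (intro allI impI subsetI)
  fix a b c p
  assume ab: "(a, b) \<in> Theta D" and "p \<in> impl a c \<times> impl b c"
  then obtain u v where p: "p = (u, v)" "u \<in> impl a c" "v \<in> impl b c"
    by blast
  have "impl u v \<subseteq> D" "impl v u \<subseteq> D"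
    using assms ab p unfolding compatible_def Theta_iff impl_set_def by blast+
  then show "p \<in> Theta D"
    using p by (simp add: Theta_iff)
qed

lemma Theta_Image_top:
  assumes "deductive_system D"
  shows "Theta D `` {top} = D"
  using deductive_system_top[OF assms] impl_top_right_subset
  by (fastforce simp: Theta_iff impl_top_left)

theorem theorem7:
  fixes D :: "'a::bounded_lattice set"
  assumes "complemented TYPE('a)"
    and "(bot::'a) \<noteq> top"
    and "deductive_system D"
    and "compatible D"
  shows "equiv UNIV (Theta D) \<and> subst_prop (Theta D) \<and> Theta D `` {top} = D"
  using equiv_Theta[OF assms(1,3,4)] subst_prop_Theta[OF assms(4)] Theta_Image_top[OF assms(3)]
  by blast

end
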